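(* Let $\phi$ be a posterior family for a model $\pi$ with data space $Y$ and parameter space $\Theta$, and let $f$ be a test quantity. For every $M\in\mathbb{N}$: (1) for any $y\in Y$, if $q_{\phi,f}(x\mid y)=x$ for all $x\in[0,1]$, then $Q_{\phi,f}(i\mid y)=\frac{i+1}{M+1}$ for all $i\in\{0,\dots,M-1\}$; (2) if $\phi$ passes continuous SBC with respect to $f$, then $\phi$ passes $M$-sample SBC with respect to $f$.
   Context: Model $\pi$: prior density $\pi_{\text{prior}}(\theta)$ on $\Theta$, observation density $\pi_{\text{obs}}(y\mid\theta)$ on $Y$, $\pi_{\text{marg}}(y)=\int_\Theta\pi_{\text{obs}}(y\mid\theta)\pi_{\text{prior}}(\theta)\,\mathrm{d}\theta$, $\pi_{\text{post}}(\theta\mid y)=\pi_{\text{obs}}(y\mid\theta)\pi_{\text{prior}}(\theta)/\pi_{\text{marg}}(y)$. A posterior family is $\phi:\Theta\times Y\to\mathbb{R}^+$ with $\int_\Theta\phi(\theta\mid y)\,\mathrm{d}\theta=1$ for all $y$; a test quantity is a measurable $f:\Theta\times Y\to\mathbb{R}$. Sample quantities: for $M\in\mathbb{N}$, $\theta_1,\dots,\theta_M$ i.i.d. from $\phi(\cdot\mid y)$, $N^{\mathtt{less}}=\sum_m\mathbb{I}[f(\theta_m,y)<f(\tilde\theta,y)]$, $N^{\mathtt{equals}}=\sum_m\mathbb{I}[f(\theta_m,y)=f(\tilde\theta,y)]$, $K$ uniform on $\{0,\dots,N^{\mathtt{equals}}\}$, $N^{\mathtt{total}}=N^{\mathtt{less}}+K$;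 $R_{\phi,f}(i\mid\tilde\theta,y)=\Pr(N^{\mathtt{total}}\le i)$; $Q_{\phi,f}(i\mid y)=\int_\Theta\pi_{\text{post}}(\tilde\theta\mid y)R_{\phi,f}(i\mid\tilde\theta,y)\,\mathrm{d}\tilde\theta$; $\phi$ passes $M$-sample SBC w.r.t. $f$ if $\int_YQ_{\phi,f}(i\mid y)\pi_{\text{marg}}(y)\,\mathrm{d}y=\frac{i+1}{M+1}$ for all $i\in\{0,\dots,M-1\}$. Continuous quantities: $C_{\phi,f}(s\mid y)=\int_\Theta\mathbb{I}[f(\theta,y)\le s]\phi(\theta\mid y)\,\mathrm{d}\theta$, $D_{\phi,f}(s\mid y)=\int_\Theta\mathbb{I}[f(\theta,y)=s]\phi(\theta\mid y)\,\mathrm{d}\theta$; with $U\sim\mathrm{uniform}[0,1]$, $r_{\phi,f}(x\mid\tilde\theta,y)=\Pr\big(C_{\phi,f}(f(\tilde\theta,y)\mid y)-U\,D_{\phi,f}(f(\tilde\theta,y)\mid y)\le x\big)$, $q_{\phi,f}(x\mid y)=\int_\Theta\pi_{\text{post}}(\tilde\theta\mid y)r_{\phi,f}(x\mid\tilde\theta,y)\,\mathrm{d}\tilde\theta$. $\phi$ passes continuous SBC w.r.t. $f$ if $\int_Yq_{\phi,f}(x\mid y)\pi_{\text{marg}}(y)\,\mathrm{d}y=x$ for all $x\in[0,1]$. *)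

theory Defs
  imports "HOL-Probability.Probability"
begin

text \<open>Parameter space Theta is a measure space MT, data space Y is a measure space MY;
  all densities are taken with respect to these base measures.
  prior :: 'a => real is pi_prior, obs y theta is pi_obs(y | theta),
  phi theta y is phi(theta | y), f theta y is the test quantity.\<close>

definition is_model :: "'a measure \<Rightarrow> 'b measure \<Rightarrow> ('a \<Rightarrow> real) \<Rightarrow> ('b \<Rightarrow> 'a \<Rightarrow> real) \<Rightarrow> bool" where
  "is_model MT MY prior obs \<longleftrightarrow>
     prior \<in> borel_measurable MT \<and>
     (\<forall>\<theta>\<in>space MT. 0 \<le> prior \<theta>) \<and>
     (\<integral>\<theta>. prior \<theta> \<partial>MT) = 1 \<and>
     (\<lambda>(y, \<theta>). obs y \<theta>) \<in> borel_measurable (MY \<Otimes>\<^sub>M MT) \<and>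
     (\<forall>y\<in>space MY. \<forall>\<theta>\<in>space MT. 0 \<le> obs y \<theta>) \<and>
     (\<forall>\<theta>\<in>space MT. (\<integral>y. obs y \<theta> \<partial>MY) = 1)"

definition marg :: "'a measure \<Rightarrow> ('a \<Rightarrow> real) \<Rightarrow> ('b \<Rightarrow> 'a \<Rightarrow> real) \<Rightarrow> 'b \<Rightarrow> real" where
  "marg MT prior obs y = (\<integral>\<theta>. obs y \<theta> * prior \<theta> \<partial>MT)"

definition post :: "'a measure \<Rightarrow> ('a \<Rightarrow> real) \<Rightarrow> ('b \<Rightarrow> 'a \<Rightarrow> real) \<Rightarrow> 'a \<Rightarrow> 'b \<Rightarrow> real" where
  "post MT prior obs \<theta> y = obs y \<theta> * prior \<theta> / marg MT prior obs y"

definition posterior_family :: "'a measure \<Rightarrow> 'b measure \<Rightarrow> ('a \<Rightarrow> 'b \<Rightarrow> real) \<Rightarrow> bool" where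
  "posterior_family MT MY phi \<longleftrightarrow>
     (\<lambda>(\<theta>, y). phi \<theta> y) \<in> borel_measurable (MT \<Otimes>\<^sub>M MY) \<and>
     (\<forall>\<theta>\<in>space MT. \<forall>y\<in>space MY. 0 \<le> phi \<theta> y) \<and>
     (\<forall>y\<in>space MY. (\<integral>\<theta>. phi \<theta> y \<partial>MT) = 1)"

definition test_quantity :: "'a measure \<Rightarrow> 'b measure \<Rightarrow> ('a \<Rightarrow> 'b \<Rightarrow> real) \<Rightarrow> bool" where
  "test_quantity MT MY f \<longleftrightarrow> (\<lambda>(\<theta>, y). f \<theta> y) \<in> borel_measurable (MT \<Otimes>\<^sub>M MY)"

definition sample_space :: "'a measure \<Rightarrow> ('a \<Rightarrow> 'b \<Rightarrow> real) \<Rightarrow> nat \<Rightarrow> 'b \<Rightarrow> (nat \<Rightarrow> 'a) measure" where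
  "sample_space MT phi M y = (\<Pi>\<^sub>M m\<in>{..<M}. density MT (\<lambda>\<theta>. ennreal (phi \<theta> y)))"

definition N_less :: "('a \<Rightarrow> 'b \<Rightarrow> real) \<Rightarrow> nat \<Rightarrow> (nat \<Rightarrow> 'a) \<Rightarrow> 'a \<Rightarrow> 'b \<Rightarrow> nat" where
  "N_less f M \<omega> \<theta>t y = card {m\<in>{..<M}. f (\<omega> m) y < f \<theta>t y}"

definition N_equals :: "('a \<Rightarrow> 'b \<Rightarrow> real) \<Rightarrow> nat \<Rightarrow> (nat \<Rightarrow> 'a) \<Rightarrow> 'a \<Rightarrow> 'b \<Rightarrow> nat" where
  "N_equals f M \<omega> \<theta>t y = card {m\<in>{..<M}. f (\<omega> m) y = f \<theta>t y}"

text \<open>Conditional probability, given the samples omega, that N_total = N_less + K <= i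
  where K is uniform on {0..N_equals}.\<close>
definition rank_cond_prob :: "('a \<Rightarrow> 'b \<Rightarrow> real) \<Rightarrow> nat \<Rightarrow> nat \<Rightarrow> (nat \<Rightarrow> 'a) \<Rightarrow> 'a \<Rightarrow> 'b \<Rightarrow> real" where
  "rank_cond_prob f M i \<omega> \<theta>t y =
     real (card {k\<in>{0..N_equals f M \<omega> \<theta>t y}. N_less f M \<omega> \<theta>t y + k \<le> i})
     / real (N_equals f M \<omega> \<theta>t y + 1)"

definition R_rank :: "'a measure \<Rightarrow> ('a \<Rightarrow> 'b \<Rightarrow> real) \<Rightarrow> ('a \<Rightarrow> 'b \<Rightarrow> real) \<Rightarrow> nat \<Rightarrow> nat \<Rightarrow> 'a \<Rightarrow> 'b \<Rightarrow> real" where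
  "R_rank MT phi f M i \<theta>t y = (\<integral>\<omega>. rank_cond_prob f M i \<omega> \<theta>t y \<partial>sample_space MT phi M y)"

definition Q_rank :: "'a measure \<Rightarrow> ('a \<Rightarrow> real) \<Rightarrow> ('b \<Rightarrow> 'a \<Rightarrow> real) \<Rightarrow> ('a \<Rightarrow> 'b \<Rightarrow> real) \<Rightarrow> ('a \<Rightarrow> 'b \<Rightarrow> real) \<Rightarrow> nat \<Rightarrow> nat \<Rightarrow> 'b \<Rightarrow> real" where
  "Q_rank MT prior obs phi f M i y = (\<integral>\<theta>t. post MT prior obs \<theta>t y * R_rank MT phi f M i \<theta>t y \<partial>MT)"

definition passes_M_SBC :: "'a measure \<Rightarrow> 'b measure \<Rightarrow> ('a \<Rightarrow> real) \<Rightarrow> ('b \<Rightarrow> 'a \<Rightarrow> real) \<Rightarrow> ('a \<Rightarrow> 'b \<Rightarrow> real) \<Rightarrow> ('a \<Rightarrow> 'b \<Rightarrow> real) \<Rightarrow> nat \<Rightarrow> bool" where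
  "passes_M_SBC MT MY prior obs phi f M \<longleftrightarrow>
     (\<forall>i<M. (\<integral>y. Q_rank MT prior obs phi f M i y * marg MT prior obs y \<partial>MY) = real (i + 1) / real (M + 1))"

definition C_cdf :: "'a measure \<Rightarrow> ('a \<Rightarrow> 'b \<Rightarrow> real) \<Rightarrow> ('a \<Rightarrow> 'b \<Rightarrow> real) \<Rightarrow> real \<Rightarrow> 'b \<Rightarrow> real" where
  "C_cdf MT phi f s y = (\<integral>\<theta>. indicator {\<theta>. f \<theta> y \<le> s} \<theta> * phi \<theta> y \<partial>MT)"

definition D_atom :: "'a measure \<Rightarrow> ('a \<Rightarrow> 'b \<Rightarrow> real) \<Rightarrow> ('a \<Rightarrow> 'b \<Rightarrow> real) \<Rightarrow> real \<Rightarrow> 'b \<Rightarrow> real" where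
  "D_atom MT phi f s y = (\<integral>\<theta>. indicator {\<theta>. f \<theta> y = s} \<theta> * phi \<theta> y \<partial>MT)"

definition r_pit :: "'a measure \<Rightarrow> ('a \<Rightarrow> 'b \<Rightarrow> real) \<Rightarrow> ('a \<Rightarrow> 'b \<Rightarrow> real) \<Rightarrow> real \<Rightarrow> 'a \<Rightarrow> 'b \<Rightarrow> real" where
  "r_pit MT phi f x \<theta>t y =
     measure (uniform_measure lborel {0..1::real})
       {u. C_cdf MT phi f (f \<theta>t y) y - u * D_atom MT phi f (f \<theta>t y) y \<le> x}"

definition q_pit :: "'a measure \<Rightarrow> ('a \<Rightarrow> real) \<Rightarrow> ('b \<Rightarrow> 'a \<Rightarrow> real) \<Rightarrow> ('a \<Rightarrow> 'b \<Rightarrow> real) \<Rightarrow> ('a \<Rightarrow> 'b \<Rightarrow> real) \<Rightarrow> real \<Rightarrow> 'b \<Rightarrow> real" where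
  "q_pit MT prior obs phi f x y = (\<integral>\<theta>t. post MT prior obs \<theta>t y * r_pit MT phi f x \<theta>t y \<partial>MT)"

definition passes_cont_SBC :: "'a measure \<Rightarrow> 'b measure \<Rightarrow> ('a \<Rightarrow> real) \<Rightarrow> ('b \<Rightarrow> 'a \<Rightarrow> real) \<Rightarrow> ('a \<Rightarrow> 'b \<Rightarrow> real) \<Rightarrow> ('a \<Rightarrow> 'b \<Rightarrow> real) \<Rightarrow> bool" where
  "passes_cont_SBC MT MY prior obs phi f \<longleftrightarrow>
     (\<forall>x\<in>{0..1}. (\<integral>y. q_pit MT prior obs phi f x y * marg MT prior obs y \<partial>MY) = x)"

end

theory Submission
  imports Defs
begin

text \<open>Fix \<open>y\<close> and the reference draw \<open>\<theta>~\<close>, and let \<open>C\<close> and \<open>D\<close> be the posterior probabilities of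
  \<open>f \<theta> \<le> f \<theta>~\<close> and \<open>f \<theta> = f \<theta>~\<close>. A tie-break \<open>K\<close> uniform on \<open>{0..N_equals}\<close> has the law of
  \<open>Bin(N_equals, V)\<close> with \<open>V\<close> uniform on \<open>[0, 1]\<close>: each tied sample is counted independently
  with probability \<open>V\<close>. Writing \<open>V = 1 - U\<close>, each of the \<open>M\<close> i.i.d. samples is then counted with
  probability \<open>C - U D\<close>, so \<open>R(i | \<theta>~, y) = E_U P(Bin(M, C - U D) \<le> i)\<close>. This is the expectation of
  the bounded function \<open>v \<mapsto> P(Bin(M, v) \<le> i)\<close> of the randomized probability integral transform
  \<open>C - U D\<close>, whose distribution function is \<open>q\<close>. If that transform is uniform, for fixed \<open>y\<close> or after
  averaging over the joint law of \<open>(y, \<theta>~)\<close>, the expectation is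
  \<open>\<integral>\<^sub>0\<^sup>1 P(Bin(M, v) \<le> i) dv = (i + 1) / (M + 1)\<close>.\<close>

section \<open>Binomial distribution functions\<close>

text \<open>For \<open>0 \<le> v \<le> 1\<close> this is \<open>P(Bin(n, v) \<le> j)\<close>, computed by conditioning on the last trial.\<close>
fun binomial_cdf :: "real \<Rightarrow> nat \<Rightarrow> int \<Rightarrow> real" where
  "binomial_cdf v 0 j = (if 0 \<le> j then 1 else 0)"
| "binomial_cdf v (Suc n) j = v * binomial_cdf v n (j - 1) + (1 - v) * binomial_cdf v n j"

lemma binomial_cdf_neg: "j < 0 \<Longrightarrow> binomial_cdf v n j = 0"
  by (induction n arbitrary: j) auto

lemma binomial_cdf_at_0: "binomial_cdf 0 n j = (if 0 \<le> j then 1 else 0)"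
  by (induction n arbitrary: j) auto

lemma binomial_cdf_at_1: "binomial_cdf 1 n j = (if int n \<le> j then 1 else 0)"
  by (induction n arbitrary: j) auto

lemma binomial_cdf_bounds:
  assumes "0 \<le> v" "v \<le> 1"
  shows "0 \<le> binomial_cdf v n j \<and> binomial_cdf v n j \<le> 1"
proof (induction n arbitrary: j)
  case (Suc n)
  then have "v * binomial_cdf v n (j - 1) + (1 - v) * binomial_cdf v n j \<le> v * 1 + (1 - v) * 1"
    using assms by (intro add_mono mult_left_mono) auto
  with Suc assms show ?case by simp
qed auto

lemma continuous_on_binomial_cdf: "continuous_on S (\<lambda>v. binomial_cdf v n j)"
  by (induction n arbitrary: j) (auto intro!: continuous_intros)

lemma borel_measurable_binomial_cdf[measurable]: "(\<lambda>v. binomial_cdf v n j) \<in> borel_measurable borel"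
  by (induction n arbitrary: j) auto

lemma binomial_cdf_has_real_derivative:
  "((\<lambda>v. binomial_cdf v (Suc n) j) has_real_derivative
     real (Suc n) * (binomial_cdf v n (j - 1) - binomial_cdf v n j)) (at v)"
proof (induction n arbitrary: j)
  case 0
  show ?case by (auto intro!: derivative_eq_intros)
next
  case (Suc n)
  show ?case
    unfolding binomial_cdf.simps(2)[of _ "Suc n"]
    by (rule derivative_eq_intros Suc.IH refl)+ (simp add: algebra_simps)
qed

lemma has_integral_binomial_cdf_diff:
  "((\<lambda>v. binomial_cdf v n (j - 1) - binomial_cdf v n j) has_integral
     ((if int (Suc n) \<le> j then 1 else 0) - (if 0 \<le> j then 1 else 0)) / real (Suc n)) {0..1}"
proof -
  have "((\<lambda>v. real (Suc n) * (binomial_cdf v n (j - 1) - binomial_cdf v n j)) has_integral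
      binomial_cdf 1 (Suc n) j - binomial_cdf 0 (Suc n) j) {0..1}"
    using binomial_cdf_has_real_derivative
    by (intro fundamental_theorem_of_calculus)
       (auto simp: has_real_derivative_iff_has_vector_derivative[symmetric] intro: has_field_derivative_at_within)
  from has_integral_mult_right[OF this, of "1 / real (Suc n)"] show ?thesis
    by (simp add: binomial_cdf_at_0 binomial_cdf_at_1 del: binomial_cdf.simps)
qed

lemma integral_binomial_cdf:
  "integral {0..1} (\<lambda>v. binomial_cdf v n j) = min (max (j + 1) 0) (int n + 1) / real (Suc n)"
proof (cases "j < 0")
  case True
  then show ?thesis by (simp add: binomial_cdf_neg)
next
  case False
  then have "-1 \<le> j" by simp
  then show ?thesis
  proof (induction j rule: int_ge_induct)
    case base
    then show ?case by (simp add: binomial_cdf_neg)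
  next
    case (step i)
    have "integral {0..1} (\<lambda>v. binomial_cdf v n i) - integral {0..1} (\<lambda>v. binomial_cdf v n (i + 1))
        = integral {0..1} (\<lambda>v. binomial_cdf v n i - binomial_cdf v n (i + 1))"
      by (intro integral_diff[symmetric] integrable_continuous_interval continuous_on_binomial_cdf)
    also have "\<dots> = ((if int (Suc n) \<le> i + 1 then 1 else 0) - (if 0 \<le> i + 1 then 1 else 0)) / real (Suc n)"
      using integral_unique[OF has_integral_binomial_cdf_diff[of n "i + 1"]] by simp
    finally have "integral {0..1} (\<lambda>v. binomial_cdf v n (i + 1))
        = integral {0..1} (\<lambda>v. binomial_cdf v n i)
          - ((if int (Suc n) \<le> i + 1 then 1 else 0) - (if 0 \<le> i + 1 then 1 else 0)) / real (Suc n)"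
      by linarith
    also have "\<dots> = (min (max (i + 1) 0) (int n + 1)
          - ((if int (Suc n) \<le> i + 1 then 1 else 0) - (if 0 \<le> i + 1 then 1 else 0))) / real (Suc n)"
      unfolding step.IH by (simp add: diff_divide_distrib)
    also have "\<dots> = min (max (i + 1 + 1) 0) (int n + 1) / real (Suc n)"
      using step.hyps by simp
    finally show ?case .
  qed
qed

lemma integral_reflect_01: "integral {0..1} (\<lambda>u. h (1 - u)) = integral {0..1::real} h"
proof -
  have "integral {0..1} (\<lambda>u. h (1 - u)) = integral {-1..-0} (\<lambda>x. h (1 + x))"
    using Henstock_Kurzweil_Integration.integral_reflect_real[where a=0 and b=1 and f="\<lambda>u. h (1 - u)"] by simp
  also have "\<dots> = integral {0..1} h"
    using integral_shift_Icc_real[of "-1" 0 h 1] by (simp add: comp_def)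
  finally show ?thesis .
qed

section \<open>The uniform distribution on the unit interval\<close>

abbreviation uniform01 :: "real measure" where
  "uniform01 \<equiv> uniform_measure lborel {0..1}"

lemma prob_space_uniform01: "prob_space uniform01"
  by (rule prob_space_uniform_measure) auto

lemma real_distribution_uniform01: "real_distribution uniform01"
  by (simp add: real_distribution_def real_distribution_axioms_def prob_space_uniform01)

lemma AE_uniform01: "AE u in uniform01. 0 \<le> u \<and> u \<le> 1"
  by (rule AE_uniform_measureI) auto

lemma integral_uniform01:
  fixes h :: "real \<Rightarrow> real"
  assumes "continuous_on UNIV h"
  shows "(\<integral>u. h u \<partial>uniform01) = integral {0..1} h"
proof -
  have "uniform01 = density lborel (\<lambda>x. ennreal (indicator {0..1} x))"
    by (simp add: uniform_measure_def ennreal_indicator divide_ennreal_def)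
  then have "(\<integral>u. h u \<partial>uniform01) = (\<integral>x. indicator {0..1} x *\<^sub>R h x \<partial>lborel)"
    using integral_density[of h lborel "indicator {0..1}"] borel_measurable_continuous_onI[OF assms]
    by simp
  also have "\<dots> = integral {0..1} h"
    using set_borel_integral_eq_integral(2)[of "{0..1}" h]
      borel_integrable_compact[OF _ continuous_on_subset[OF assms]]
    by (simp add: set_lebesgue_integral_def set_integrable_def)
  finally show ?thesis .
qed

lemma cdf_uniform01: "0 \<le> x \<Longrightarrow> x \<le> 1 \<Longrightarrow> cdf uniform01 x = x"
  by (simp add: cdf_def measure_uniform_measure Int_atLeastAtMost atLeastAtMost_def[symmetric])

lemma uniform01_eqI:
  assumes \<mu>: "real_distribution \<mu>" and cdf_\<mu>: "\<And>x. 0 \<le> x \<Longrightarrow> x \<le> 1 \<Longrightarrow> cdf \<mu> x = x"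
  shows "\<mu> = uniform01"
proof (rule cdf_unique[OF \<mu> real_distribution_uniform01], rule ext)
  interpret \<mu>: real_distribution \<mu> by (rule \<mu>)
  interpret U: real_distribution uniform01 by (rule real_distribution_uniform01)
  fix x :: real
  consider "x < 0" | "0 \<le> x" "x \<le> 1" | "1 < x" by linarith
  then show "cdf \<mu> x = cdf uniform01 x"
  proof cases
    case 1
    then have "cdf \<mu> x \<le> cdf \<mu> 0" "cdf uniform01 x \<le> cdf uniform01 0"
      by (auto intro!: \<mu>.cdf_nondecreasing U.cdf_nondecreasing)
    then show ?thesis
      using cdf_\<mu>[of 0] cdf_uniform01[of 0] \<mu>.cdf_nonneg[of x] U.cdf_nonneg[of x] by simp
  next
    case 2
    then show ?thesis by (simp add: cdf_\<mu> cdf_uniform01)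
  next
    case 3
    then have "cdf \<mu> 1 \<le> cdf \<mu> x" "cdf uniform01 1 \<le> cdf uniform01 x"
      by (auto intro!: \<mu>.cdf_nondecreasing U.cdf_nondecreasing)
    then show ?thesis
      using cdf_\<mu>[of 1] cdf_uniform01[of 1] \<mu>.cdf_bounded_prob[of x] U.cdf_bounded_prob[of x] by simp
  qed
qed

text \<open>Off \<open>[0, 1]\<close> the polynomial \<open>binomial_cdf\<close> is unbounded; clamping its argument gives a bounded
  continuous test function with the same values on \<open>[0, 1]\<close>.\<close>
definition clamp01 :: "real \<Rightarrow> real" where
  "clamp01 x = max 0 (min 1 x)"

lemma continuous_on_clamp01: "continuous_on S clamp01"
  unfolding clamp01_def by (intro continuous_intros)

lemma borel_measurable_clamp01[measurable]: "clamp01 \<in> borel_measurable borel"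
  unfolding clamp01_def by measurable

lemma clamp01_bounds: "0 \<le> clamp01 x" "clamp01 x \<le> 1"
  unfolding clamp01_def by auto

lemma clamp01_id: "0 \<le> x \<Longrightarrow> x \<le> 1 \<Longrightarrow> clamp01 x = x"
  unfolding clamp01_def by auto

lemma binomial_cdf_clamp01_bounds: "\<bar>binomial_cdf (clamp01 x) n j\<bar> \<le> 1"
  using binomial_cdf_bounds[OF clamp01_bounds, of x n j] by simp

lemma continuous_on_binomial_cdf_clamp01: "continuous_on S (\<lambda>x. binomial_cdf (clamp01 x) n j)"
  by (rule continuous_on_compose2[OF continuous_on_binomial_cdf continuous_on_clamp01]) auto

text \<open>A uniform draw from \<open>{0..b}\<close> has the law of \<open>Bin(b, V)\<close> with \<open>V\<close> uniform on \<open>[0, 1]\<close>.\<close>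
lemma uniform_tiebreak_eq_binomial_mixture:
  "real (card {k\<in>{0..b}. a + k \<le> (i::nat)}) / real (b + 1)
     = (\<integral>u. binomial_cdf (clamp01 (1 - u)) b (int i - int a) \<partial>uniform01)"
proof -
  have "real (card {k\<in>{0..b}. a + k \<le> i}) = min (max (int i - int a + 1) 0) (int b + 1)"
  proof (cases "a \<le> i")
    case True
    then have "{k\<in>{0..b}. a + k \<le> i} = {0..min b (i - a)}" by auto
    with True show ?thesis by (simp add: min_def) arith
  qed simp
  also have "\<dots> / real (b + 1) = integral {0..1} (\<lambda>v. binomial_cdf v b (int i - int a))"
    by (simp add: integral_binomial_cdf)
  also have "\<dots> = integral {0..1} (\<lambda>v. binomial_cdf (clamp01 v) b (int i - int a))"
    by (rule integral_cong) (simp add: clamp01_id)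
  also have "\<dots> = integral {0..1} (\<lambda>u. binomial_cdf (clamp01 (1 - u)) b (int i - int a))"
    by (rule integral_reflect_01[symmetric])
  also have "\<dots> = (\<integral>u. binomial_cdf (clamp01 (1 - u)) b (int i - int a) \<partial>uniform01)"
    by (rule integral_uniform01[symmetric], rule continuous_on_compose2[OF continuous_on_binomial_cdf_clamp01])
       (auto intro!: continuous_intros)
  finally show ?thesis .
qed

section \<open>Rank statistics of i.i.d. samples\<close>

lemma (in prob_space) integral_trichotomy:
  fixes g :: "'a \<Rightarrow> real"
  assumes [measurable]: "g \<in> borel_measurable M"
  shows "(\<integral>x. (if g x < T then A else if g x = T then B else C) \<partial>M)
    = prob {x\<in>space M. g x < T} * A + prob {x\<in>space M. g x = T} * B
      + (1 - prob {x\<in>space M. g x < T} - prob {x\<in>space M. g x = T}) * C"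
proof -
  let ?L = "{x\<in>space M. g x < T}" and ?E = "{x\<in>space M. g x = T}"
  have "?L \<in> events" "?E \<in> events"
    by measurable
  then have "integrable M (indicator ?L :: 'a \<Rightarrow> real)" "integrable M (indicator ?E :: 'a \<Rightarrow> real)"
    by (auto simp: less_top[symmetric])
  then have "(\<integral>x. C + ((A - C) * indicator ?L x + (B - C) * indicator ?E x) \<partial>M)
      = C + ((A - C) * prob ?L + (B - C) * prob ?E)"
    by (simp add: prob_space Int_absorb2)
  moreover have "(\<integral>x. (if g x < T then A else if g x = T then B else C) \<partial>M)
      = (\<integral>x. C + ((A - C) * indicator ?L x + (B - C) * indicator ?E x) \<partial>M)"
    by (rule Bochner_Integration.integral_cong) (auto simp: indicator_def)
  ultimately show ?thesis
    by (simp add: algebra_simps)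
qed

lemma (in prob_space) abs_integral_le_const:
  fixes f :: "'a \<Rightarrow> real"
  assumes "f \<in> borel_measurable M" "\<And>x. x \<in> space M \<Longrightarrow> \<bar>f x\<bar> \<le> B"
  shows "\<bar>\<integral>x. f x \<partial>M\<bar> \<le> B"
proof -
  have "\<bar>\<integral>x. f x \<partial>M\<bar> \<le> (\<integral>x. \<bar>f x\<bar> \<partial>M)"
    by (rule integral_abs_bound)
  also have "\<dots> \<le> B"
    using assms by (intro integral_le_const integrable_const_bound[where B=B] AE_I2) auto
  finally show ?thesis .
qed

lemma card_fun_upd_lessThan_Suc:
  "card {m\<in>{..<Suc M}. P ((z(M := x)) m)} = card {m\<in>{..<M}. P (z m)} + (if P x then 1 else 0)"
proof -
  have "{m\<in>{..<Suc M}. P ((z(M := x)) m)} = {m\<in>{..<M}. P (z m)} \<union> (if P x then {M} else {})"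
    by (auto simp: less_Suc_eq)
  then show ?thesis
    by (auto simp: card_insert_if)
qed

lemma measurable_card_PiM:
  fixes K :: nat
  assumes [measurable]: "Measurable.pred N P" and "{..<K} \<subseteq> I"
  shows "(\<lambda>z. card {m\<in>{..<K}. P (z m)}) \<in> measurable (PiM I (\<lambda>_. N)) (count_space UNIV)"
proof (rule measurable_card[where S="\<lambda>z. {m\<in>{..<K}. P (z m)}"])
  fix i
  show "{z \<in> space (PiM I (\<lambda>_. N)). i \<in> {m\<in>{..<K}. P (z m)}} \<in> sets (PiM I (\<lambda>_. N))"
  proof (cases "i < K")
    case True
    with assms(2) have "i \<in> I" by auto
    then show ?thesis by simp
  qed simp
qed

lemma integrable_binomial_cdf_counts:
  fixes g :: "'a \<Rightarrow> real" and K :: nat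
  assumes "prob_space N" "g \<in> borel_measurable N" "0 \<le> w" "w \<le> 1" "{..<K} \<subseteq> I" "finite I"
  shows "integrable (PiM I (\<lambda>_. N))
    (\<lambda>z. binomial_cdf w (card {m\<in>{..<K}. g (z m) = T}) (j - int (card {m\<in>{..<K}. g (z m) < T})))"
proof -
  interpret prob_space "PiM I (\<lambda>_. N)"
    using assms(1,6) by (intro prob_space_PiM) auto
  have [measurable]: "g \<in> borel_measurable N" by (rule assms(2))
  have preds: "Measurable.pred N (\<lambda>x. g x = T)" "Measurable.pred N (\<lambda>x. g x < T)"
    by measurable
  have [measurable]: "(\<lambda>z. card {m\<in>{..<K}. g (z m) = T}) \<in> measurable (PiM I (\<lambda>_. N)) (count_space UNIV)"
    "(\<lambda>z. card {m\<in>{..<K}. g (z m) < T}) \<in> measurable (PiM I (\<lambda>_. N)) (count_space UNIV)"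
    by (rule measurable_card_PiM[OF preds(1) assms(5)], rule measurable_card_PiM[OF preds(2) assms(5)])
  show ?thesis
    using binomial_cdf_bounds[OF assms(3,4)]
    by (intro integrable_const_bound[where B=1] AE_I2) (simp, measurable)
qed

text \<open>A sample below \<open>T\<close> is always a success and a tie is one with probability \<open>w\<close>; the induction
  conditions on the last sample.\<close>
lemma integral_binomial_cdf_counts:
  fixes g :: "'a \<Rightarrow> real" and T w :: real and M :: nat
  assumes N: "prob_space N" and g[measurable]: "g \<in> borel_measurable N" and w: "0 \<le> w" "w \<le> 1"
  defines "v \<equiv> measure N {\<theta>\<in>space N. g \<theta> < T} + w * measure N {\<theta>\<in>space N. g \<theta> = T}"
  shows "(\<integral>z. binomial_cdf w (card {m\<in>{..<M}. g (z m) = T}) (j - int (card {m\<in>{..<M}. g (z m) < T}))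
      \<partial>PiM {..<M} (\<lambda>_. N)) = binomial_cdf v M j"
proof (induction M arbitrary: j)
  case 0
  interpret prob_space "PiM {} (\<lambda>_. N)"
    using N by (intro prob_space_PiM) auto
  show ?case by (simp add: prob_space)
next
  case (Suc M)
  interpret N: prob_space N by (rule N)
  interpret product_sigma_finite "\<lambda>_. N" ..
  define F where "F K z = binomial_cdf w (card {m\<in>{..<K}. g (z m) = T}) (j - int (card {m\<in>{..<K}. g (z m) < T}))"
    for K :: nat and z :: "nat \<Rightarrow> 'a"
  define a where "a z = card {m\<in>{..<M}. g (z m) < T}" for z :: "nat \<Rightarrow> 'a"
  define b where "b z = card {m\<in>{..<M}. g (z m) = T}" for z :: "nat \<Rightarrow> 'a"
  have "(\<integral>z. F (Suc M) z \<partial>PiM (insert M {..<M}) (\<lambda>_. N))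
      = (\<integral>z. (\<integral>\<theta>. F (Suc M) (z(M := \<theta>)) \<partial>N) \<partial>PiM {..<M} (\<lambda>_. N))"
    unfolding F_def using N w by (intro product_integral_insert integrable_binomial_cdf_counts) auto
  also have "\<dots> = (\<integral>z. (\<integral>\<theta>. (if g \<theta> < T then binomial_cdf w (b z) (j - 1 - a z)
        else if g \<theta> = T then binomial_cdf w (Suc (b z)) (j - a z) else binomial_cdf w (b z) (j - a z)) \<partial>N)
      \<partial>PiM {..<M} (\<lambda>_. N))"
    unfolding F_def a_def b_def card_fun_upd_lessThan_Suc[where P="\<lambda>x. g x = T"]
      card_fun_upd_lessThan_Suc[where P="\<lambda>x. g x < T"]
    by (intro Bochner_Integration.integral_cong refl) (simp del: binomial_cdf.simps add: algebra_simps)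
  also have "\<dots> = (\<integral>z. v * binomial_cdf w (b z) (j - 1 - a z) + (1 - v) * binomial_cdf w (b z) (j - a z)
      \<partial>PiM {..<M} (\<lambda>_. N))"
    by (intro Bochner_Integration.integral_cong refl, subst N.integral_trichotomy[OF g])
       (simp add: v_def algebra_simps)
  also have "\<dots> = v * binomial_cdf v M (j - 1) + (1 - v) * binomial_cdf v M j"
    using Suc.IH[of "j - 1"] Suc.IH[of j] integrable_binomial_cdf_counts[OF N g w, of M "{..<M}"]
    by (simp add: a_def b_def)
  finally show ?case
    by (simp add: F_def lessThan_Suc)
qed

lemma prob_space_density_real:
  assumes "w \<in> borel_measurable M" "\<And>x. x \<in> space M \<Longrightarrow> 0 \<le> w x" "(\<integral>x. w x \<partial>M) = 1"
  shows "prob_space (density M (\<lambda>x. ennreal (w x)))"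
proof
  have "integrable M w"
    using assms(3) not_integrable_integral_eq by force
  have "emeasure (density M (\<lambda>x. ennreal (w x))) (space M) = (\<integral>\<^sup>+x. ennreal (w x) * indicator (space M) x \<partial>M)"
    using assms(1) by (simp add: emeasure_density)
  also have "\<dots> = (\<integral>\<^sup>+x. ennreal (w x) \<partial>M)"
    by (rule nn_integral_cong) simp
  also have "\<dots> = 1"
    using nn_integral_eq_integral[OF \<open>integrable M w\<close>] assms(2,3) by simp
  finally show "emeasure (density M (\<lambda>x. ennreal (w x))) (space (density M (\<lambda>x. ennreal (w x)))) = 1"
    by simp
qed

lemma measure_density_real:
  assumes "w \<in> borel_measurable M" "\<And>x. x \<in> space M \<Longrightarrow> 0 \<le> w x" "A \<in> sets M"
  shows "measure (density M (\<lambda>x. ennreal (w x))) A = (\<integral>x. indicator A x * w x \<partial>M)"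
proof -
  have "measure (density M (\<lambda>x. ennreal (w x))) A = (\<integral>x. indicator A x \<partial>density M (\<lambda>x. ennreal (w x)))"
    using assms(3) sets.sets_into_space[OF assms(3)] by (simp add: Int_absorb2)
  also have "\<dots> = (\<integral>x. w x * indicator A x \<partial>M)"
    using assms by (subst integral_density) auto
  finally show ?thesis
    by (simp add: mult.commute)
qed

definition draw_measure :: "'a measure \<Rightarrow> ('a \<Rightarrow> 'b \<Rightarrow> real) \<Rightarrow> 'b \<Rightarrow> 'a measure" where
  "draw_measure MT phi y = density MT (\<lambda>\<theta>. ennreal (phi \<theta> y))"

lemma space_draw_measure[simp]: "space (draw_measure MT phi y) = space MT"
  and sets_draw_measure[simp, measurable_cong]: "sets (draw_measure MT phi y) = sets MT"
  by (simp_all add: draw_measure_def)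

lemma posterior_familyD:
  assumes "posterior_family MT MY phi" "y \<in> space MY"
  shows "(\<lambda>\<theta>. phi \<theta> y) \<in> borel_measurable MT" "\<And>\<theta>. \<theta> \<in> space MT \<Longrightarrow> 0 \<le> phi \<theta> y"
    "(\<integral>\<theta>. phi \<theta> y \<partial>MT) = 1"
proof -
  have "(\<lambda>(\<theta>, y). phi \<theta> y) \<in> borel_measurable (MT \<Otimes>\<^sub>M MY)"
    using assms(1) unfolding posterior_family_def by simp
  from measurable_compose[OF measurable_Pair2'[OF assms(2)] this]
  show "(\<lambda>\<theta>. phi \<theta> y) \<in> borel_measurable MT" by simp
  show "\<And>\<theta>. \<theta> \<in> space MT \<Longrightarrow> 0 \<le> phi \<theta> y" "(\<integral>\<theta>. phi \<theta> y \<partial>MT) = 1"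
    using assms unfolding posterior_family_def by auto
qed

lemma test_quantity_measurable_at:
  assumes "test_quantity MT MY f" "y \<in> space MY"
  shows "(\<lambda>\<theta>. f \<theta> y) \<in> borel_measurable MT"
  using measurable_compose[OF measurable_Pair2'[OF assms(2)], of "\<lambda>(\<theta>, y). f \<theta> y"] assms(1)
  unfolding test_quantity_def by simp

lemma prob_space_draw_measure:
  "posterior_family MT MY phi \<Longrightarrow> y \<in> space MY \<Longrightarrow> prob_space (draw_measure MT phi y)"
  unfolding draw_measure_def by (rule prob_space_density_real) (auto dest: posterior_familyD)

lemma
  assumes phi: "posterior_family MT MY phi" and f: "test_quantity MT MY f" and y: "y \<in> space MY"
  shows C_cdf_eq_measure: "C_cdf MT phi f s y = measure (draw_measure MT phi y) {\<theta>\<in>space MT. f \<theta> y \<le> s}"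
    and D_atom_eq_measure: "D_atom MT phi f s y = measure (draw_measure MT phi y) {\<theta>\<in>space MT. f \<theta> y = s}"
proof -
  note [measurable] = posterior_familyD(1)[OF phi y] test_quantity_measurable_at[OF f y]
  have "measure (draw_measure MT phi y) {\<theta>\<in>space MT. P (f \<theta> y)}
      = (\<integral>\<theta>. indicator {\<theta>. P (f \<theta> y)} \<theta> * phi \<theta> y \<partial>MT)"
    if [measurable]: "Measurable.pred borel P" for P
  proof -
    have "measure (draw_measure MT phi y) {\<theta>\<in>space MT. P (f \<theta> y)}
        = (\<integral>\<theta>. indicator {\<theta>\<in>space MT. P (f \<theta> y)} \<theta> * phi \<theta> y \<partial>MT)"
      unfolding draw_measure_def
      by (rule measure_density_real) (auto simp: posterior_familyD[OF phi y])
    also have "\<dots> = (\<integral>\<theta>. indicator {\<theta>. P (f \<theta> y)} \<theta> * phi \<theta> y \<partial>MT)"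
      by (rule Bochner_Integration.integral_cong) (auto simp: indicator_def)
    finally show ?thesis .
  qed
  from this[of "\<lambda>x. x \<le> s"] this[of "\<lambda>x. x = s"]
  show "C_cdf MT phi f s y = measure (draw_measure MT phi y) {\<theta>\<in>space MT. f \<theta> y \<le> s}"
    and "D_atom MT phi f s y = measure (draw_measure MT phi y) {\<theta>\<in>space MT. f \<theta> y = s}"
    by (simp_all add: C_cdf_def D_atom_def)
qed

lemma C_cdf_D_atom_bounds:
  assumes phi: "posterior_family MT MY phi" and f: "test_quantity MT MY f" and y: "y \<in> space MY"
  shows "0 \<le> D_atom MT phi f s y \<and> D_atom MT phi f s y \<le> C_cdf MT phi f s y \<and> C_cdf MT phi f s y \<le> 1"
proof -
  interpret prob_space "draw_measure MT phi y"
    by (rule prob_space_draw_measure[OF phi y])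
  note [measurable] = test_quantity_measurable_at[OF f y]
  have "prob {\<theta>\<in>space MT. f \<theta> y = s} \<le> prob {\<theta>\<in>space MT. f \<theta> y \<le> s}"
    by (rule finite_measure_mono) auto
  then show ?thesis
    by (simp add: C_cdf_eq_measure[OF assms] D_atom_eq_measure[OF assms])
qed

lemma C_cdf_eq_less_plus_D_atom:
  assumes phi: "posterior_family MT MY phi" and f: "test_quantity MT MY f" and y: "y \<in> space MY"
  shows "C_cdf MT phi f s y = measure (draw_measure MT phi y) {\<theta>\<in>space MT. f \<theta> y < s} + D_atom MT phi f s y"
proof -
  interpret prob_space "draw_measure MT phi y"
    by (rule prob_space_draw_measure[OF phi y])
  note [measurable] = test_quantity_measurable_at[OF f y]
  have "C_cdf MT phi f s y = prob ({\<theta>\<in>space MT. f \<theta> y < s} \<union> {\<theta>\<in>space MT. f \<theta> y = s})"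
    unfolding C_cdf_eq_measure[OF assms] by (intro arg_cong[where f=prob]) auto
  also have "\<dots> = prob {\<theta>\<in>space MT. f \<theta> y < s} + prob {\<theta>\<in>space MT. f \<theta> y = s}"
    by (rule finite_measure_Union) auto
  finally show ?thesis
    by (simp add: D_atom_eq_measure[OF assms])
qed

lemma R_rank_eq_tiebreak_mixture:
  fixes MT :: "'a measure" and t :: 'a and M i :: nat
  assumes phi: "posterior_family MT MY phi" and f: "test_quantity MT MY f" and y: "y \<in> space MY"
  shows "R_rank MT phi f M i t y = (\<integral>u. binomial_cdf (measure (draw_measure MT phi y) {\<theta>\<in>space MT. f \<theta> y < f t y}
    + clamp01 (1 - u) * D_atom MT phi f (f t y) y) M i \<partial>uniform01)"
proof -
  let ?N = "draw_measure MT phi y"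
  let ?S = "PiM {..<M} (\<lambda>_. ?N)"
  interpret N: prob_space ?N
    by (rule prob_space_draw_measure[OF phi y])
  interpret S: prob_space ?S
    by (intro prob_space_PiM N.prob_space_axioms)
  interpret U: prob_space uniform01
    by (rule prob_space_uniform01)
  interpret SU: pair_prob_space ?S uniform01 ..
  note [measurable] = test_quantity_measurable_at[OF f y]
  define G where "G z u = binomial_cdf (clamp01 (1 - u)) (N_equals f M z t y) (int i - int (N_less f M z t y))"
    for z u
  have "(\<lambda>z. N_equals f M z t y) \<in> measurable ?S (count_space UNIV)"
    "(\<lambda>z. N_less f M z t y) \<in> measurable ?S (count_space UNIV)"
    unfolding N_equals_def N_less_def by (rule measurable_card_PiM; simp)+
  then have "(\<lambda>(z, u). G z u) \<in> borel_measurable (?S \<Otimes>\<^sub>M uniform01)"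
    unfolding G_def split_beta' by measurable
  then have G_integrable: "integrable (?S \<Otimes>\<^sub>M uniform01) (\<lambda>(z, u). G z u)"
    using binomial_cdf_bounds[OF clamp01_bounds]
    by (intro SU.P.integrable_const_bound[where B=1] AE_I2) (auto simp: G_def)
  have "R_rank MT phi f M i t y = (\<integral>z. (\<integral>u. G z u \<partial>uniform01) \<partial>?S)"
    unfolding R_rank_def sample_space_def draw_measure_def[symmetric] rank_cond_prob_def G_def
      uniform_tiebreak_eq_binomial_mixture ..
  also have "\<dots> = (\<integral>u. (\<integral>z. G z u \<partial>?S) \<partial>uniform01)"
    by (rule SU.Fubini_integral[symmetric, OF G_integrable])
  also have "\<dots> = (\<integral>u. binomial_cdf (N.prob {\<theta>\<in>space MT. f \<theta> y < f t y}
      + clamp01 (1 - u) * D_atom MT phi f (f t y) y) M i \<partial>uniform01)"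
  proof (rule Bochner_Integration.integral_cong[OF refl])
    fix u
    show "(\<integral>z. G z u \<partial>?S) = binomial_cdf (N.prob {\<theta>\<in>space MT. f \<theta> y < f t y}
        + clamp01 (1 - u) * D_atom MT phi f (f t y) y) M i"
      using integral_binomial_cdf_counts[where g="\<lambda>\<theta>. f \<theta> y" and T="f t y" and w="clamp01 (1 - u)"
          and M=M and j=i, OF N.prob_space_axioms _ clamp01_bounds]
      unfolding G_def N_equals_def N_less_def D_atom_eq_measure[OF phi f y] by simp
  qed
  finally show ?thesis .
qed

lemma R_rank_eq_binomial_mixture:
  fixes MT :: "'a measure" and t :: 'a and M i :: nat
  assumes phi: "posterior_family MT MY phi" and f: "test_quantity MT MY f" and y: "y \<in> space MY"
  defines "C \<equiv> C_cdf MT phi f (f t y) y" and "D \<equiv> D_atom MT phi f (f t y) y"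
  shows "R_rank MT phi f M i t y = (\<integral>u. binomial_cdf (clamp01 (C - u * D)) M i \<partial>uniform01)"
proof -
  define p where "p = measure (draw_measure MT phi y) {\<theta>\<in>space MT. f \<theta> y < f t y}"
  have C: "C = p + D"
    unfolding C_def D_def p_def by (rule C_cdf_eq_less_plus_D_atom[OF phi f y])
  have "0 \<le> D" "C \<le> 1"
    using C_cdf_D_atom_bounds[OF phi f y, of "f t y"] unfolding C_def D_def by auto
  have "R_rank MT phi f M i t y = (\<integral>u. binomial_cdf (p + clamp01 (1 - u) * D) M i \<partial>uniform01)"
    unfolding p_def D_def by (rule R_rank_eq_tiebreak_mixture[OF phi f y])
  also have "\<dots> = (\<integral>u. binomial_cdf (clamp01 (C - u * D)) M i \<partial>uniform01)"
  proof (rule integral_cong_AE)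
    from AE_uniform01
    show "AE u in uniform01. binomial_cdf (p + clamp01 (1 - u) * D) M i
        = binomial_cdf (clamp01 (C - u * D)) M i"
    proof eventually_elim
      case (elim u)
      then have "0 \<le> (1 - u) * D" "(1 - u) * D \<le> D"
        using \<open>0 \<le> D\<close> by (auto intro: mult_left_le_one_le)
      then have "clamp01 (p + (1 - u) * D) = p + (1 - u) * D"
        using \<open>C \<le> 1\<close> unfolding C by (intro clamp01_id) (auto simp: p_def)
      moreover have "C - u * D = p + (1 - u) * D"
        by (simp add: C algebra_simps)
      ultimately show ?case
        using elim by (simp add: clamp01_id)
    qed
  qed measurable
  finally show ?thesis .
qed

section \<open>Uniformity of the randomized probability integral transform\<close>

lemma measure_uniform01_pit_le_1:
  assumes "0 \<le> d" "d \<le> c" "c \<le> 1"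
  shows "measure uniform01 {u. c - u * d \<le> 1} = 1"
proof -
  interpret prob_space uniform01
    by (rule prob_space_uniform01)
  have "AE u in uniform01. c - u * d \<le> 1"
    using AE_uniform01 by eventually_elim (use assms in \<open>auto intro: order_trans[OF _ assms(3)]\<close>)
  then show ?thesis
    using prob_Collect_eq_1[of "\<lambda>u. c - u * d \<le> 1"] by simp
qed

lemma borel_measurable_measure_uniform01_pit:
  assumes [measurable]: "c \<in> borel_measurable N" "d \<in> borel_measurable N"
  shows "(\<lambda>z. measure uniform01 {u. c z - u * d z \<le> x}) \<in> borel_measurable N"
proof -
  interpret prob_space uniform01
    by (rule prob_space_uniform01)
  have "measure uniform01 {u. c z - u * d z \<le> x} = (\<integral>u. indicator {u. c z - u * d z \<le> x} u \<partial>uniform01)" for z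
    by simp
  also have "\<dots> z = (\<integral>u. (if c z - u * d z \<le> x then 1 else 0) \<partial>uniform01)" for z
    by (rule Bochner_Integration.integral_cong) (auto simp: indicator_def)
  finally show ?thesis
    by simp measurable
qed

lemma integral_pit_weight_eq_1:
  assumes "\<And>z. z \<in> space N \<Longrightarrow> 0 \<le> d z \<and> d z \<le> c z \<and> c z \<le> 1"
    and "\<And>x. 0 \<le> x \<Longrightarrow> x \<le> 1 \<Longrightarrow> (\<integral>z. w z * measure uniform01 {u. c z - u * d z \<le> x} \<partial>N) = x"
  shows "(\<integral>z. w z \<partial>N) = 1"
proof -
  have "(\<integral>z. w z \<partial>N) = (\<integral>z. w z * measure uniform01 {u. c z - u * d z \<le> 1} \<partial>N)"
    using assms(1) measure_uniform01_pit_le_1 by (intro Bochner_Integration.integral_cong) auto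
  then show ?thesis
    using assms(2)[of 1] by simp
qed

definition pit_law :: "'c measure \<Rightarrow> ('c \<Rightarrow> real) \<Rightarrow> ('c \<Rightarrow> real) \<Rightarrow> ('c \<Rightarrow> real) \<Rightarrow> real measure" where
  "pit_law N w c d = distr (density N (\<lambda>z. ennreal (w z)) \<Otimes>\<^sub>M uniform01) borel (\<lambda>(z, u). c z - u * d z)"

lemma
  fixes N :: "'c measure" and w c d :: "'c \<Rightarrow> real"
  assumes [measurable]: "w \<in> borel_measurable N" "c \<in> borel_measurable N" "d \<in> borel_measurable N"
    and "\<And>z. z \<in> space N \<Longrightarrow> 0 \<le> w z" "(\<integral>z. w z \<partial>N) = 1"
  shows real_distribution_pit_law: "real_distribution (pit_law N w c d)"
    and integral_pit_law: "g \<in> borel_measurable borel \<Longrightarrow> (\<And>x. \<bar>g x\<bar> \<le> K) \<Longrightarrow>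
      (\<integral>x. g x \<partial>pit_law N w c d) = (\<integral>z. w z * (\<integral>u. g (c z - u * d z) \<partial>uniform01) \<partial>N)"
proof -
  let ?Nw = "density N (\<lambda>z. ennreal (w z))"
  interpret Nw: prob_space ?Nw
    using assms(4,5) by (intro prob_space_density_real) auto
  interpret U: prob_space uniform01
    by (rule prob_space_uniform01)
  interpret NwU: pair_prob_space ?Nw uniform01 ..
  show "real_distribution (pit_law N w c d)"
    unfolding pit_law_def real_distribution_def real_distribution_axioms_def
    by (auto intro!: NwU.P.prob_space_distr)
  assume [measurable]: "g \<in> borel_measurable borel" and g_bounded: "\<And>x. \<bar>g x\<bar> \<le> K"
  have "integrable (?Nw \<Otimes>\<^sub>M uniform01) (\<lambda>p. g (case p of (z, u) \<Rightarrow> c z - u * d z))"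
    by (rule NwU.P.integrable_const_bound[where B=K]) (auto simp: g_bounded)
  then have "(\<integral>x. g x \<partial>pit_law N w c d) = (\<integral>z. (\<integral>u. g (c z - u * d z) \<partial>uniform01) \<partial>?Nw)"
    by (simp add: pit_law_def integral_distr NwU.integral_fst'[symmetric])
  also have "\<dots> = (\<integral>z. w z * (\<integral>u. g (c z - u * d z) \<partial>uniform01) \<partial>N)"
    using assms(4) by (subst integral_density) auto
  finally show "(\<integral>x. g x \<partial>pit_law N w c d) = (\<integral>z. w z * (\<integral>u. g (c z - u * d z) \<partial>uniform01) \<partial>N)" .
qed

lemma pit_law_eq_uniform01:
  fixes N :: "'c measure" and w c d :: "'c \<Rightarrow> real"
  assumes [measurable]: "w \<in> borel_measurable N" "c \<in> borel_measurable N" "d \<in> borel_measurable N"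
    and "\<And>z. z \<in> space N \<Longrightarrow> 0 \<le> w z"
    and cd: "\<And>z. z \<in> space N \<Longrightarrow> 0 \<le> d z \<and> d z \<le> c z \<and> c z \<le> 1"
    and pit_uniform: "\<And>x. 0 \<le> x \<Longrightarrow> x \<le> 1 \<Longrightarrow> (\<integral>z. w z * measure uniform01 {u. c z - u * d z \<le> x} \<partial>N) = x"
  shows "pit_law N w c d = uniform01"
proof (rule uniform01_eqI)
  have w_1: "(\<integral>z. w z \<partial>N) = 1"
    using cd pit_uniform by (rule integral_pit_weight_eq_1)
  note pit_law = real_distribution_pit_law[OF assms(1-4) w_1] integral_pit_law[OF assms(1-4) w_1]
  show "real_distribution (pit_law N w c d)"
    by (rule pit_law(1))
  fix x :: real assume "0 \<le> x" "x \<le> 1"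
  have "cdf (pit_law N w c d) x = (\<integral>v. indicator {..x} v \<partial>pit_law N w c d)"
    using pit_law(1) by (simp add: cdf_def real_distribution.events_eq_borel)
  also have "\<dots> = (\<integral>z. w z * (\<integral>u. indicator {..x} (c z - u * d z) \<partial>uniform01) \<partial>N)"
    by (rule pit_law(2)[of _ 1]) (auto simp: indicator_def)
  also have "\<dots> = (\<integral>z. w z * measure uniform01 {u. c z - u * d z \<le> x} \<partial>N)"
  proof -
    have "(\<integral>u. indicator {..x} (c z - u * d z) \<partial>uniform01)
        = (\<integral>u. indicator {u. c z - u * d z \<le> x} u \<partial>uniform01 :: real)" for z
      by (rule Bochner_Integration.integral_cong) (auto simp: indicator_def)
    then show ?thesis
      by simp
  qed
  finally show "cdf (pit_law N w c d) x = x"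
    using pit_uniform[OF \<open>0 \<le> x\<close> \<open>x \<le> 1\<close>] by (simp only:)
qed

lemma integral_pit_binomial_cdf:
  fixes N :: "'c measure" and w c d :: "'c \<Rightarrow> real"
  assumes "w \<in> borel_measurable N" "c \<in> borel_measurable N" "d \<in> borel_measurable N"
    and "\<And>z. z \<in> space N \<Longrightarrow> 0 \<le> w z"
    and "\<And>z. z \<in> space N \<Longrightarrow> 0 \<le> d z \<and> d z \<le> c z \<and> c z \<le> 1"
    and "\<And>x. 0 \<le> x \<Longrightarrow> x \<le> 1 \<Longrightarrow> (\<integral>z. w z * measure uniform01 {u. c z - u * d z \<le> x} \<partial>N) = x"
    and "i \<le> M"
  shows "(\<integral>z. w z * (\<integral>u. binomial_cdf (clamp01 (c z - u * d z)) M i \<partial>uniform01) \<partial>N)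
    = real (i + 1) / real (M + 1)"
proof -
  have "(\<integral>z. w z \<partial>N) = 1"
    using assms(5,6) by (rule integral_pit_weight_eq_1)
  then have "(\<integral>z. w z * (\<integral>u. binomial_cdf (clamp01 (c z - u * d z)) M i \<partial>uniform01) \<partial>N)
      = (\<integral>x. binomial_cdf (clamp01 x) M i \<partial>pit_law N w c d)"
    using assms(1-4) binomial_cdf_clamp01_bounds by (intro integral_pit_law[symmetric]) auto
  also have "\<dots> = (\<integral>u. binomial_cdf (clamp01 u) M i \<partial>uniform01)"
    by (simp add: pit_law_eq_uniform01[OF assms(1-6)])
  also have "\<dots> = integral {0..1} (\<lambda>v. binomial_cdf (clamp01 v) M i)"
    by (simp add: integral_uniform01 continuous_on_binomial_cdf_clamp01)
  also have "\<dots> = integral {0..1} (\<lambda>v. binomial_cdf v M i)"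
    by (rule integral_cong) (simp add: clamp01_id)
  also have "\<dots> = real (i + 1) / real (M + 1)"
    using \<open>i \<le> M\<close> by (simp add: integral_binomial_cdf)
  finally show ?thesis .
qed

section \<open>Averaging over the model\<close>

lemma is_modelD:
  assumes "is_model MT MY prior obs"
  shows "prior \<in> borel_measurable MT" "\<And>\<theta>. \<theta> \<in> space MT \<Longrightarrow> 0 \<le> prior \<theta>"
    "(\<integral>\<theta>. prior \<theta> \<partial>MT) = 1"
    "(\<lambda>(y, \<theta>). obs y \<theta>) \<in> borel_measurable (MY \<Otimes>\<^sub>M MT)"
    "\<And>y \<theta>. y \<in> space MY \<Longrightarrow> \<theta> \<in> space MT \<Longrightarrow> 0 \<le> obs y \<theta>"
    "\<And>\<theta>. \<theta> \<in> space MT \<Longrightarrow> (\<integral>y. obs y \<theta> \<partial>MY) = 1"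
  using assms unfolding is_model_def by auto

lemma
  assumes "is_model MT MY prior obs" "y \<in> space MY" "\<theta> \<in> space MT"
  shows marg_nonneg: "0 \<le> marg MT prior obs y"
    and post_nonneg: "0 \<le> post MT prior obs \<theta> y"
proof -
  show "0 \<le> marg MT prior obs y"
    unfolding marg_def using is_modelD[OF assms(1)] assms(2) by (intro integral_nonneg_AE AE_I2) auto
  then show "0 \<le> post MT prior obs \<theta> y"
    unfolding post_def using is_modelD[OF assms(1)] assms(2,3) by simp
qed

lemma
  assumes "sigma_finite_measure MT" "is_model MT MY prior obs"
  shows borel_measurable_post: "(\<lambda>(y, \<theta>). post MT prior obs \<theta> y) \<in> borel_measurable (MY \<Otimes>\<^sub>M MT)"
    and borel_measurable_marg: "marg MT prior obs \<in> borel_measurable MY"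
proof -
  interpret sigma_finite_measure MT by (rule assms(1))
  note [measurable] = is_modelD(1,4)[OF assms(2)]
  show "marg MT prior obs \<in> borel_measurable MY"
    unfolding marg_def by measurable
  then show "(\<lambda>(y, \<theta>). post MT prior obs \<theta> y) \<in> borel_measurable (MY \<Otimes>\<^sub>M MT)"
    unfolding post_def by measurable
qed

lemma
  assumes "sigma_finite_measure MT" "posterior_family MT MY phi" "test_quantity MT MY f"
  shows borel_measurable_C_cdf_at_f:
      "(\<lambda>(y, \<theta>). C_cdf MT phi f (f \<theta> y) y) \<in> borel_measurable (MY \<Otimes>\<^sub>M MT)"
    and borel_measurable_D_atom_at_f:
      "(\<lambda>(y, \<theta>). D_atom MT phi f (f \<theta> y) y) \<in> borel_measurable (MY \<Otimes>\<^sub>M MT)"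
proof -
  interpret sigma_finite_measure MT by (rule assms(1))
  have [measurable]: "(\<lambda>(\<theta>, y). phi \<theta> y) \<in> borel_measurable (MT \<Otimes>\<^sub>M MY)"
    "(\<lambda>(\<theta>, y). f \<theta> y) \<in> borel_measurable (MT \<Otimes>\<^sub>M MY)"
    using assms(2,3) unfolding posterior_family_def test_quantity_def by auto
  have "(\<lambda>(y, \<theta>). C_cdf MT phi f (f \<theta> y) y)
      = (\<lambda>(y, \<theta>). \<integral>\<theta>'. (if f \<theta>' y \<le> f \<theta> y then phi \<theta>' y else 0) \<partial>MT)"
    by (auto simp: C_cdf_def indicator_def intro!: Bochner_Integration.integral_cong)
  then show "(\<lambda>(y, \<theta>). C_cdf MT phi f (f \<theta> y) y) \<in> borel_measurable (MY \<Otimes>\<^sub>M MT)"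
    by simp measurable
  have "(\<lambda>(y, \<theta>). D_atom MT phi f (f \<theta> y) y)
      = (\<lambda>(y, \<theta>). \<integral>\<theta>'. (if f \<theta>' y = f \<theta> y then phi \<theta>' y else 0) \<partial>MT)"
    by (auto simp: D_atom_def indicator_def intro!: Bochner_Integration.integral_cong)
  then show "(\<lambda>(y, \<theta>). D_atom MT phi f (f \<theta> y) y) \<in> borel_measurable (MY \<Otimes>\<^sub>M MT)"
    by simp measurable
qed

lemma integrable_joint_density:
  assumes "sigma_finite_measure MT" "sigma_finite_measure MY" "is_model MT MY prior obs"
  shows "integrable (MY \<Otimes>\<^sub>M MT) (\<lambda>(y, \<theta>). obs y \<theta> * prior \<theta>)"
proof (rule integrableI_nonneg)
  interpret pair_sigma_finite MY MT
    using assms(1,2) by (intro pair_sigma_finite.intro)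
  note model = is_modelD[OF assms(3)]
  note [measurable] = model(1,4)
  show "(\<lambda>(y, \<theta>). obs y \<theta> * prior \<theta>) \<in> borel_measurable (MY \<Otimes>\<^sub>M MT)"
    by measurable
  show "AE p in MY \<Otimes>\<^sub>M MT. 0 \<le> (case p of (y, \<theta>) \<Rightarrow> obs y \<theta> * prior \<theta>)"
    using model(2,5) by (intro AE_I2) (auto simp: space_pair_measure)
  have "(\<integral>\<^sup>+y. ennreal (obs y \<theta> * prior \<theta>) \<partial>MY) = ennreal (prior \<theta>)" if "\<theta> \<in> space MT" for \<theta>
  proof -
    have "integrable MY (\<lambda>y. obs y \<theta> * prior \<theta>)"
      using model(6)[OF that] not_integrable_integral_eq by force
    then show ?thesis
      using that model by (subst nn_integral_eq_integral) auto
  qed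
  then have "(\<integral>\<^sup>+p. ennreal (case p of (y, \<theta>) \<Rightarrow> obs y \<theta> * prior \<theta>) \<partial>(MY \<Otimes>\<^sub>M MT))
      = (\<integral>\<^sup>+\<theta>. ennreal (prior \<theta>) \<partial>MT)"
    by (subst nn_integral_snd[symmetric]) (auto intro: nn_integral_cong)
  also have "\<dots> = 1"
    using model(2,3) not_integrable_integral_eq[of MT prior] by (subst nn_integral_eq_integral) auto
  finally show "(\<integral>\<^sup>+p. ennreal (case p of (y, \<theta>) \<Rightarrow> obs y \<theta> * prior \<theta>) \<partial>(MY \<Otimes>\<^sub>M MT)) < \<infinity>"
    by simp
qed

text \<open>Where the marginal vanishes, the posterior is a division by zero; the product with the
  marginal is nevertheless always dominated by the joint density.\<close>
lemma integral_marg_post: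
  assumes "sigma_finite_measure MT" "sigma_finite_measure MY" "is_model MT MY prior obs"
    and g: "g \<in> borel_measurable (MY \<Otimes>\<^sub>M MT)" "\<And>p. p \<in> space (MY \<Otimes>\<^sub>M MT) \<Longrightarrow> \<bar>g p\<bar> \<le> B"
  shows "(\<integral>y. marg MT prior obs y * (\<integral>\<theta>. post MT prior obs \<theta> y * g (y, \<theta>) \<partial>MT) \<partial>MY)
    = (\<integral>p. marg MT prior obs (fst p) * post MT prior obs (snd p) (fst p) * g p \<partial>(MY \<Otimes>\<^sub>M MT))"
proof -
  interpret pair_sigma_finite MY MT
    using assms(1,2) by (intro pair_sigma_finite.intro)
  note model = is_modelD[OF assms(3)]
  note [measurable] = g(1) borel_measurable_marg[OF assms(1,3)] borel_measurable_post[OF assms(1,3)]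
  have "\<bar>marg MT prior obs y * post MT prior obs \<theta> y * g (y, \<theta>)\<bar> \<le> \<bar>B * (obs y \<theta> * prior \<theta>)\<bar>"
    if "y \<in> space MY" "\<theta> \<in> space MT" for y \<theta>
  proof -
    have "0 \<le> marg MT prior obs y * post MT prior obs \<theta> y"
      "marg MT prior obs y * post MT prior obs \<theta> y \<le> obs y \<theta> * prior \<theta>"
      using that model marg_nonneg[OF assms(3) that] post_nonneg[OF assms(3) that] by (auto simp: post_def)
    then have "\<bar>marg MT prior obs y * post MT prior obs \<theta> y * g (y, \<theta>)\<bar> \<le> B * (obs y \<theta> * prior \<theta>)"
      using g(2)[of "(y, \<theta>)"] that by (simp add: abs_mult space_pair_measure mult_mono' mult.commute)
    then show ?thesis
      by (rule order_trans) (rule abs_ge_self)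
  qed
  then have "integrable (MY \<Otimes>\<^sub>M MT) (\<lambda>p. marg MT prior obs (fst p) * post MT prior obs (snd p) (fst p) * g p)"
    by (intro Bochner_Integration.integrable_bound[OF integrable_mult_right[OF integrable_joint_density[OF assms(1-3)], of B]])
       (auto simp: space_pair_measure split_beta' intro!: AE_I2)
  then show ?thesis
    by (simp add: integral_fst'[symmetric] mult.assoc)
qed

lemma Q_rank_uniform_if_q_pit_uniform:
  assumes MT: "sigma_finite_measure MT" and model: "is_model MT MY prior obs"
    and phi: "posterior_family MT MY phi" and f: "test_quantity MT MY f" and y: "y \<in> space MY"
    and q_pit_uniform: "\<forall>x\<in>{0..1}. q_pit MT prior obs phi f x y = x" and "i \<le> M"
  shows "Q_rank MT prior obs phi f M i y = real (i + 1) / real (M + 1)"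
proof -
  define c where "c \<theta> = C_cdf MT phi f (f \<theta> y) y" for \<theta>
  define d where "d \<theta> = D_atom MT phi f (f \<theta> y) y" for \<theta>
  have section_measurable: "(\<lambda>\<theta>. F (y, \<theta>)) \<in> borel_measurable MT"
    if "(\<lambda>p. F p) \<in> borel_measurable (MY \<Otimes>\<^sub>M MT)" for F :: "_ \<Rightarrow> real"
    using measurable_compose[OF measurable_Pair1'[OF y] that] .
  have "Q_rank MT prior obs phi f M i y
      = (\<integral>\<theta>. post MT prior obs \<theta> y * (\<integral>u. binomial_cdf (clamp01 (c \<theta> - u * d \<theta>)) M i \<partial>uniform01) \<partial>MT)"
    unfolding Q_rank_def R_rank_eq_binomial_mixture[OF phi f y] c_def d_def ..
  also have "\<dots> = real (i + 1) / real (M + 1)"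
  proof (rule integral_pit_binomial_cdf)
    show "(\<lambda>\<theta>. post MT prior obs \<theta> y) \<in> borel_measurable MT"
      "c \<in> borel_measurable MT" "d \<in> borel_measurable MT"
      unfolding c_def d_def
      using section_measurable[OF borel_measurable_post[OF MT model]]
        section_measurable[OF borel_measurable_C_cdf_at_f[OF MT phi f]]
        section_measurable[OF borel_measurable_D_atom_at_f[OF MT phi f]]
      by simp_all
    show "0 \<le> post MT prior obs \<theta> y" if "\<theta> \<in> space MT" for \<theta>
      using post_nonneg[OF model y that] .
    show "0 \<le> d \<theta> \<and> d \<theta> \<le> c \<theta> \<and> c \<theta> \<le> 1" for \<theta>
      unfolding c_def d_def by (rule C_cdf_D_atom_bounds[OF phi f y])
    show "(\<integral>\<theta>. post MT prior obs \<theta> y * measure uniform01 {u. c \<theta> - u * d \<theta> \<le> x} \<partial>MT) = x"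
      if "0 \<le> x" "x \<le> 1" for x
      using q_pit_uniform that unfolding q_pit_def r_pit_def c_def d_def by simp
  qed fact
  finally show ?thesis .
qed

lemma passes_M_SBC_if_passes_cont_SBC:
  fixes MT :: "'a measure" and MY :: "'b measure"
  assumes MT: "sigma_finite_measure MT" and MY: "sigma_finite_measure MY"
    and model: "is_model MT MY prior obs" and phi: "posterior_family MT MY phi" and f: "test_quantity MT MY f"
    and cont_SBC: "passes_cont_SBC MT MY prior obs phi f"
  shows "passes_M_SBC MT MY prior obs phi f M"
  unfolding passes_M_SBC_def
proof (intro allI impI)
  fix i assume "i < M"
  interpret U: prob_space uniform01
    by (rule prob_space_uniform01)
  define c where "c p = C_cdf MT phi f (f (snd p) (fst p)) (fst p)" for p :: "'b \<times> 'a"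
  define d where "d p = D_atom MT phi f (f (snd p) (fst p)) (fst p)" for p :: "'b \<times> 'a"
  define w where "w p = marg MT prior obs (fst p) * post MT prior obs (snd p) (fst p)" for p :: "'b \<times> 'a"
  have cd_measurable[measurable]: "c \<in> borel_measurable (MY \<Otimes>\<^sub>M MT)" "d \<in> borel_measurable (MY \<Otimes>\<^sub>M MT)"
    using borel_measurable_C_cdf_at_f[OF MT phi f] borel_measurable_D_atom_at_f[OF MT phi f]
    unfolding c_def[abs_def] d_def[abs_def] by (simp_all add: split_beta')
  have integral_w: "(\<integral>y. marg MT prior obs y * (\<integral>\<theta>. post MT prior obs \<theta> y * g (y, \<theta>) \<partial>MT) \<partial>MY)
      = (\<integral>p. w p * g p \<partial>(MY \<Otimes>\<^sub>M MT))"
    if "g \<in> borel_measurable (MY \<Otimes>\<^sub>M MT)" "\<And>p. \<bar>g p\<bar> \<le> 1" for g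
    unfolding w_def using that by (intro integral_marg_post[OF MT MY model]) auto
  have "(\<integral>y. Q_rank MT prior obs phi f M i y * marg MT prior obs y \<partial>MY)
      = (\<integral>y. marg MT prior obs y * (\<integral>\<theta>. post MT prior obs \<theta> y
          * (\<integral>u. binomial_cdf (clamp01 (c (y, \<theta>) - u * d (y, \<theta>))) M i \<partial>uniform01) \<partial>MT) \<partial>MY)"
    by (intro Bochner_Integration.integral_cong)
       (simp_all add: Q_rank_def R_rank_eq_binomial_mixture[OF phi f] c_def d_def mult.commute)
  also have "\<dots> = (\<integral>p. w p * (\<integral>u. binomial_cdf (clamp01 (c p - u * d p)) M i \<partial>uniform01) \<partial>(MY \<Otimes>\<^sub>M MT))"
    by (rule integral_w) (measurable, rule U.abs_integral_le_const, simp_all add: binomial_cdf_clamp01_bounds)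
  also have "\<dots> = real (i + 1) / real (M + 1)"
  proof (rule integral_pit_binomial_cdf)
    show "w \<in> borel_measurable (MY \<Otimes>\<^sub>M MT)"
      using borel_measurable_marg[OF MT model] borel_measurable_post[OF MT model]
      unfolding w_def by measurable
    show "0 \<le> w p" if "p \<in> space (MY \<Otimes>\<^sub>M MT)" for p
      using that marg_nonneg[OF model] post_nonneg[OF model] by (auto simp: w_def space_pair_measure)
    show "0 \<le> d p \<and> d p \<le> c p \<and> c p \<le> 1" if "p \<in> space (MY \<Otimes>\<^sub>M MT)" for p
      using that C_cdf_D_atom_bounds[OF phi f] by (auto simp: c_def d_def space_pair_measure)
    fix x :: real assume "0 \<le> x" "x \<le> 1"
    have "x = (\<integral>y. q_pit MT prior obs phi f x y * marg MT prior obs y \<partial>MY)"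
      using cont_SBC \<open>0 \<le> x\<close> \<open>x \<le> 1\<close> unfolding passes_cont_SBC_def by simp
    also have "\<dots> = (\<integral>y. marg MT prior obs y * (\<integral>\<theta>. post MT prior obs \<theta> y
        * measure uniform01 {u. c (y, \<theta>) - u * d (y, \<theta>) \<le> x} \<partial>MT) \<partial>MY)"
      by (intro Bochner_Integration.integral_cong) (simp_all add: q_pit_def r_pit_def c_def d_def mult.commute)
    also have "\<dots> = (\<integral>p. w p * measure uniform01 {u. c p - u * d p \<le> x} \<partial>(MY \<Otimes>\<^sub>M MT))"
      by (rule integral_w[OF borel_measurable_measure_uniform01_pit[OF cd_measurable]])
         (metis U.prob_le_1 measure_nonneg abs_of_nonneg)
    finally show "(\<integral>p. w p * measure uniform01 {u. c p - u * d p \<le> x} \<partial>(MY \<Otimes>\<^sub>M MT)) = x"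
      by simp
  qed (use \<open>i < M\<close> in simp_all)
  finally show "(\<integral>y. Q_rank MT prior obs phi f M i y * marg MT prior obs y \<partial>MY) = real (i + 1) / real (M + 1)" .
qed

theorem theorem3:
  fixes MT :: "'a measure" and MY :: "'b measure"
    and prior :: "'a \<Rightarrow> real" and obs :: "'b \<Rightarrow> 'a \<Rightarrow> real"
    and phi :: "'a \<Rightarrow> 'b \<Rightarrow> real" and f :: "'a \<Rightarrow> 'b \<Rightarrow> real"
    and M :: nat
  assumes "sigma_finite_measure MT" and "sigma_finite_measure MY"
    and "is_model MT MY prior obs"
    and "posterior_family MT MY phi"
    and "test_quantity MT MY f"
  shows "(\<forall>y\<in>space MY. (\<forall>x\<in>{0..1}. q_pit MT prior obs phi f x y = x) \<longrightarrow>
            (\<forall>i<M. Q_rank MT prior obs phi f M i y = real (i + 1) / real (M + 1)))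
       \<and> (passes_cont_SBC MT MY prior obs phi f \<longrightarrow> passes_M_SBC MT MY prior obs phi f M)"
proof (intro conjI ballI impI allI)
  fix y i
  assume "y \<in> space MY" "\<forall>x\<in>{0..1}. q_pit MT prior obs phi f x y = x" "i < M"
  then show "Q_rank MT prior obs phi f M i y = real (i + 1) / real (M + 1)"
    by (intro Q_rank_uniform_if_q_pit_uniform[OF assms(1,3-5)]) auto
next
  assume "passes_cont_SBC MT MY prior obs phi f"
  then show "passes_M_SBC MT MY prior obs phi f M"
    by (rule passes_M_SBC_if_passes_cont_SBC[OF assms])
qed

end
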